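(* For every instance, $H^{PW''}\le \tfrac{32000}{16947}H^*$ (note $\tfrac{32000}{16947}\approx 1.888$). That is, the approximation ratio of algorithm PW'' never exceeds $\tfrac{32000}{16947}$.
   Context: An instance consists of an integer $n\ge 1$ and growth rates $1=h(1)\ge h(2)\ge\cdots\ge h(n)>0$ of bamboos $b_1,\dots,b_n$. Bamboo Garden Trimming (discrete version): - All heights are $0$ initially. - On each day $t=1,2,\dots$ every bamboo $b_j$ grows by $h(j)$. - At the end of each day the gardener cuts exactly one bamboo $\sigma(t)\in\{1,\dots,n\}$ back to height $0$. The height of a schedule $\sigma:\mathbb{N}\to\{1,\dots,n\}$ is the supremum, over all days $t$ and all $j$, of the height of $b_j$ at the end of day $t$ just before the cut. $H^*$ denotes the infimum of this height over all schedules. Value of algorithm PW'': - Split $\{1,\dots,n\}$ into four sets: - $S_1=\{j: \tfrac23<h(j)\le 1\}$; - $S_2=\{j:\tfrac12<h(j)\le\tfrac23\}$; - $S_3=\{j: h(j)\le\tfrac12 \text{ and } \tfrac23 2^{-k}<h(j)\le 2^{-k}\text{ for some integer }k\ge1\}$; - $S_4=\{j: h(j)\le\tfrac12\text{ and } 2^{-(k+1)}<h(j)\le \tfrac23 2^{-k}\text{ for some integer }k\ge 1\}$. - Modified growths: $h''(j)=2^{-k}$ for $j\in S_3$ and $h''(j)=\tfrac23 2^{-k}$ for $j\in S_4$, with $k$ as in the definition of the set. - Let $\pi_1=|S_1|$, $sh_3=\sum_{j\in S_3}h''(j)$, $sh_4=\sum_{j\in S_4}h''(j)$, $\pi_3=\lfloor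 sh_3\rfloor$, $\pi_4=\lfloor sh_4\rfloor$, $f_3=sh_3-\pi_3$, $f_4=sh_4-\pi_4$. - Option (a): $\pi_R(a)=\lceil f_3+f_4\rceil$ and $z(a)=\pi_1+|S_2|+\pi_3+\pi_4+\pi_R(a)$. - Option (b): if $S_2=\emptyset$ put $z(b)=+\infty$. Otherwise let $h^*=\max_{j\in S_2}h(j)$ and $f_2=\tfrac12$ if $|S_2|$ is odd, $f_2=0$ if $|S_2|$ is even. Then $\pi_R(b)=\lceil f_2+f_3+f_4\rceil$ and $z(b)=2h^*\,(\pi_1+\lfloor |S_2|/2\rfloor+\pi_3+\pi_4+\pi_R(b))$. - The value returned by algorithm PW'' is $H^{PW''}=\min\{z(a),z(b)\}$. The paper takes this as the maximum height of the periodic pinwheel trimming schedule that it builds from these partitions. *)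

theory Defs
  imports "HOL-Analysis.Analysis"
begin

definition valid_instance :: "nat \<Rightarrow> (nat \<Rightarrow> real) \<Rightarrow> bool" where
  "valid_instance n h \<longleftrightarrow> n \<ge> 1 \<and> h 1 = 1 \<and>
     (\<forall>i j. 1 \<le> i \<and> i \<le> j \<and> j \<le> n \<longrightarrow> h j \<le> h i) \<and> h n > 0"

text \<open>A schedule cuts bamboo sigma t at the end of day t, for days t = 1,2,...
  (the value at 0 is irrelevant).\<close>
definition is_schedule :: "nat \<Rightarrow> (nat \<Rightarrow> nat) \<Rightarrow> bool" where
  "is_schedule n \<sigma> \<longleftrightarrow> (\<forall>t\<ge>1. \<sigma> t \<in> {1..n})"

definition last_cut :: "(nat \<Rightarrow> nat) \<Rightarrow> nat \<Rightarrow> nat \<Rightarrow> nat" where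
  "last_cut \<sigma> j t = Max (insert 0 {s. 1 \<le> s \<and> s < t \<and> \<sigma> s = j})"

text \<open>Height of bamboo j at the end of day t, just before the cut.\<close>
definition height_before_cut :: "(nat \<Rightarrow> real) \<Rightarrow> (nat \<Rightarrow> nat) \<Rightarrow> nat \<Rightarrow> nat \<Rightarrow> real" where
  "height_before_cut h \<sigma> j t = h j * real (t - last_cut \<sigma> j t)"

definition schedule_height :: "nat \<Rightarrow> (nat \<Rightarrow> real) \<Rightarrow> (nat \<Rightarrow> nat) \<Rightarrow> ereal" where
  "schedule_height n h \<sigma> = (SUP t\<in>{1..}. SUP j\<in>{1..n}. ereal (height_before_cut h \<sigma> j t))"

definition opt_height :: "nat \<Rightarrow> (nat \<Rightarrow> real) \<Rightarrow> ereal" where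
  "opt_height n h = (INF \<sigma>\<in>{\<sigma>. is_schedule n \<sigma>}. schedule_height n h \<sigma>)"

definition S1 :: "nat \<Rightarrow> (nat \<Rightarrow> real) \<Rightarrow> nat set" where
  "S1 n h = {j\<in>{1..n}. 2/3 < h j \<and> h j \<le> 1}"

definition S2 :: "nat \<Rightarrow> (nat \<Rightarrow> real) \<Rightarrow> nat set" where
  "S2 n h = {j\<in>{1..n}. 1/2 < h j \<and> h j \<le> 2/3}"

definition S3 :: "nat \<Rightarrow> (nat \<Rightarrow> real) \<Rightarrow> nat set" where
  "S3 n h = {j\<in>{1..n}. h j \<le> 1/2 \<and>
     (\<exists>k::nat. k \<ge> 1 \<and> 2/3 * (1/2)^k < h j \<and> h j \<le> (1/2)^k)}"

definition S4 :: "nat \<Rightarrow> (nat \<Rightarrow> real) \<Rightarrow> nat set" where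
  "S4 n h = {j\<in>{1..n}. h j \<le> 1/2 \<and>
     (\<exists>k::nat. k \<ge> 1 \<and> (1/2)^(k+1) < h j \<and> h j \<le> 2/3 * (1/2)^k)}"

definition h2_S3 :: "real \<Rightarrow> real" where
  "h2_S3 x = (1/2) ^ (THE k::nat. k \<ge> 1 \<and> 2/3 * (1/2)^k < x \<and> x \<le> (1/2)^k)"

definition h2_S4 :: "real \<Rightarrow> real" where
  "h2_S4 x = 2/3 * (1/2) ^ (THE k::nat. k \<ge> 1 \<and> (1/2)^(k+1) < x \<and> x \<le> 2/3 * (1/2)^k)"

definition sh3 :: "nat \<Rightarrow> (nat \<Rightarrow> real) \<Rightarrow> real" where
  "sh3 n h = (\<Sum>j\<in>S3 n h. h2_S3 (h j))"

definition sh4 :: "nat \<Rightarrow> (nat \<Rightarrow> real) \<Rightarrow> real" where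
  "sh4 n h = (\<Sum>j\<in>S4 n h. h2_S4 (h j))"

definition z_a :: "nat \<Rightarrow> (nat \<Rightarrow> real) \<Rightarrow> real" where
  "z_a n h = (let \<pi>3 = \<lfloor>sh3 n h\<rfloor>; \<pi>4 = \<lfloor>sh4 n h\<rfloor>;
                  f3 = sh3 n h - \<pi>3; f4 = sh4 n h - \<pi>4 in
     real (card (S1 n h)) + real (card (S2 n h)) + of_int \<pi>3 + of_int \<pi>4
       + of_int \<lceil>f3 + f4\<rceil>)"

definition z_b :: "nat \<Rightarrow> (nat \<Rightarrow> real) \<Rightarrow> ereal" where
  "z_b n h = (if S2 n h = {} then \<infinity> else
     (let hs = Max (h ` S2 n h);
          f2 = (if odd (card (S2 n h)) then 1/2 else 0 :: real);
          \<pi>3 = \<lfloor>sh3 n h\<rfloor>; \<pi>4 = \<lfloor>sh4 n h\<rfloor>;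
          f3 = sh3 n h - \<pi>3; f4 = sh4 n h - \<pi>4 in
      ereal (2 * hs * (real (card (S1 n h)) + real (card (S2 n h) div 2)
        + of_int \<pi>3 + of_int \<pi>4 + of_int \<lceil>f2 + f3 + f4\<rceil>))))"

definition H_PW2 :: "nat \<Rightarrow> (nat \<Rightarrow> real) \<Rightarrow> ereal" where
  "H_PW2 n h = min (ereal (z_a n h)) (z_b n h)"

end

theory Submission
  imports Defs
begin

text \<open>
  Any schedule of height H satisfies H \<ge> \<Sum>h(j): up to day T the bamboos grow by
  T \<Sum>h(j) in total, while bamboo j grows by at most H between consecutive cuts and
  only T - 1 cuts happen. If n \<ge> 2 also H \<ge> 2, since a bound below 2 forces b1 to be cut
  every day. On the other side, rounding a rate in S3 or S4 up to h'' increases it by a factor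
  at most 3/2, and the floors and ceilings in PW'' cost at most one extra unit, so both
  options are bounded by simple expressions in |S1|, |S2|, h* and the rounded sum.
  A fixed convex combination of the two options is then dominated by a fixed convex combination
  of the two lower bounds.
\<close>

section \<open>Lower bounds on the optimal height\<close>

definition heights_bounded_by :: "nat \<Rightarrow> (nat \<Rightarrow> real) \<Rightarrow> (nat \<Rightarrow> nat) \<Rightarrow> real \<Rightarrow> bool" where
  "heights_bounded_by n h \<sigma> H \<longleftrightarrow>
     (\<forall>t j. t \<ge> 1 \<longrightarrow> j \<in> {1..n} \<longrightarrow> height_before_cut h \<sigma> j t \<le> H)"

definition cut_count :: "(nat \<Rightarrow> nat) \<Rightarrow> nat \<Rightarrow> nat \<Rightarrow> nat" where
  "cut_count \<sigma> j T = card {s. 1 \<le> s \<and> s < T \<and> \<sigma> s = j}"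

lemma valid_instance_pos: "valid_instance n h \<Longrightarrow> j \<in> {1..n} \<Longrightarrow> h j > 0"
  unfolding valid_instance_def by (metis atLeastAtMost_iff less_le_trans order.refl not_le)

lemma last_cut_eq_0:
  assumes "{s. 1 \<le> s \<and> s < t \<and> \<sigma> s = j} = {}"
  shows "last_cut \<sigma> j t = 0"
  unfolding last_cut_def assms by simp

lemma last_cut_greatest:
  assumes "{s. 1 \<le> s \<and> s < t \<and> \<sigma> s = j} \<noteq> {}"
  shows "last_cut \<sigma> j t \<in> {s. 1 \<le> s \<and> s < t \<and> \<sigma> s = j}"
    and "\<And>s. s \<in> {s. 1 \<le> s \<and> s < t \<and> \<sigma> s = j} \<Longrightarrow> s \<le> last_cut \<sigma> j t"
proof -
  let ?S = "{s. 1 \<le> s \<and> s < t \<and> \<sigma> s = j}"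
  have "finite ?S" by (rule finite_subset[of _ "{..<t}"]) auto
  moreover have "last_cut \<sigma> j t = Max ?S"
    unfolding last_cut_def using \<open>finite ?S\<close> assms by (simp add: max_def)
  ultimately show "last_cut \<sigma> j t \<in> ?S" "\<And>s. s \<in> ?S \<Longrightarrow> s \<le> last_cut \<sigma> j t"
    using Max_in[OF \<open>finite ?S\<close> assms] by simp_all
qed

lemma cut_count_Suc:
  "cut_count \<sigma> j (Suc T) = cut_count \<sigma> j T + (if 1 \<le> T \<and> \<sigma> T = j then 1 else 0)"
proof -
  have "finite {s. 1 \<le> s \<and> s < T \<and> \<sigma> s = j}" by (rule finite_subset[of _ "{..<T}"]) auto
  moreover have "{s. 1 \<le> s \<and> s < Suc T \<and> \<sigma> s = j} =
      (if 1 \<le> T \<and> \<sigma> T = j then insert T else id) {s. 1 \<le> s \<and> s < T \<and> \<sigma> s = j}"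
    by (auto simp: less_Suc_eq)
  ultimately show ?thesis unfolding cut_count_def by simp
qed

lemma sum_cut_count:
  assumes "is_schedule n \<sigma>"
  shows "(\<Sum>j\<in>{1..n}. cut_count \<sigma> j T) = T - 1"
proof (induction T)
  case (Suc T)
  have "(\<Sum>j\<in>{1..n}. if 1 \<le> T \<and> \<sigma> T = j then 1 else 0) = (if 1 \<le> T then 1 else 0 :: nat)"
    using assms unfolding is_schedule_def by (auto simp: sum.delta)
  with Suc.IH show ?case by (simp add: cut_count_Suc sum.distrib)
qed (simp add: cut_count_def)

lemma growth_le_cut_count:
  assumes H: "\<And>t. t \<ge> 1 \<Longrightarrow> height_before_cut h \<sigma> j t \<le> H" and "T \<ge> 1"
  shows "h j * real T \<le> (real (cut_count \<sigma> j T) + 1) * H"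
  using \<open>T \<ge> 1\<close>
proof (induction T rule: less_induct)
  case (less T)
  let ?S = "{s. 1 \<le> s \<and> s < T \<and> \<sigma> s = j}"
  show ?case
  proof (cases "?S = {}")
    case True
    then have "last_cut \<sigma> j T = 0" "cut_count \<sigma> j T = 0"
      by (auto simp: last_cut_eq_0 cut_count_def)
    then show ?thesis using H[OF less.prems] by (simp add: height_before_cut_def)
  next
    case False
    define L where "L = last_cut \<sigma> j T"
    have L: "1 \<le> L" "L < T" "\<sigma> L = j" using last_cut_greatest(1)[OF False] unfolding L_def by auto
    have "?S = insert L {s. 1 \<le> s \<and> s < L \<and> \<sigma> s = j}"
      using L last_cut_greatest(2)[OF False] unfolding L_def[symmetric] by fastforce
    moreover have "finite {s. 1 \<le> s \<and> s < L \<and> \<sigma> s = j}"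
      by (rule finite_subset[of _ "{..<L}"]) auto
    ultimately have "cut_count \<sigma> j T = cut_count \<sigma> j L + 1" unfolding cut_count_def by simp
    moreover have "h j * real L \<le> (real (cut_count \<sigma> j L) + 1) * H" using less.IH[OF L(2) L(1)] .
    moreover have "h j * (real T - real L) \<le> H"
      using H[OF less.prems] L(2) unfolding L_def height_before_cut_def by simp
    ultimately show ?thesis by (simp add: algebra_simps)
  qed
qed

lemma one_le_height_bound:
  assumes "valid_instance n h" "heights_bounded_by n h \<sigma> H"
  shows "1 \<le> H"
proof -
  have "last_cut \<sigma> 1 1 = 0" by (rule last_cut_eq_0) auto
  then show ?thesis
    using assms unfolding valid_instance_def heights_bounded_by_def height_before_cut_def
    by (metis atLeastAtMost_iff diff_zero le_refl mult.right_neutral of_nat_1)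
qed

lemma average_growth_le:
  assumes "is_schedule n \<sigma>" "heights_bounded_by n h \<sigma> H" "T \<ge> 1"
  shows "real T * (\<Sum>j\<in>{1..n}. h j) \<le> (real T - 1 + real n) * H"
proof -
  have "real T * (\<Sum>j\<in>{1..n}. h j) = (\<Sum>j\<in>{1..n}. h j * real T)"
    by (simp add: sum_distrib_left mult.commute)
  also have "\<dots> \<le> (\<Sum>j\<in>{1..n}. (real (cut_count \<sigma> j T) + 1) * H)"
    using assms(2,3) unfolding heights_bounded_by_def
    by (intro sum_mono growth_le_cut_count) auto
  also have "\<dots> = (real (\<Sum>j\<in>{1..n}. cut_count \<sigma> j T) + real n) * H"
    by (simp add: sum_distrib_right[symmetric] sum.distrib)
  also have "\<dots> = (real T - 1 + real n) * H" using sum_cut_count[OF assms(1), of T] assms(3) by simp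
  finally show ?thesis .
qed

lemma sum_rates_le_height_bound:
  assumes "valid_instance n h" "is_schedule n \<sigma>" "heights_bounded_by n h \<sigma> H"
  shows "(\<Sum>j\<in>{1..n}. h j) \<le> H"
proof (rule ccontr)
  let ?d = "(\<Sum>j\<in>{1..n}. h j) - H"
  assume "\<not> ?thesis"
  then have d: "?d > 0" by simp
  have H: "1 \<le> H" by (rule one_le_height_bound[OF assms(1,3)])
  obtain T :: nat where T: "real n * H / ?d < real T" using reals_Archimedean2 by blast
  have "0 \<le> real n * H / ?d" using d H by simp
  then have "T \<ge> 1" using T by linarith
  have "real n * H < real T * ?d" using T d by (simp add: field_simps)
  also have "\<dots> \<le> (real n - 1) * H"
    using average_growth_le[OF assms(2,3) \<open>T \<ge> 1\<close>] by (simp add: algebra_simps)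
  finally show False using H by simp
qed

lemma two_le_height_bound:
  assumes vi: "valid_instance n h" and "heights_bounded_by n h \<sigma> H" "n \<ge> 2"
  shows "2 \<le> H"
proof (rule ccontr)
  assume "\<not> 2 \<le> H"
  have n1: "n \<ge> 1" and h1: "h 1 = 1" using vi unfolding valid_instance_def by auto
  have H: "\<And>t j. t \<ge> 1 \<Longrightarrow> j \<in> {1..n} \<Longrightarrow> height_before_cut h \<sigma> j t \<le> H"
    using assms(2) unfolding heights_bounded_by_def by blast
  have cut_1: "\<sigma> s = 1" if "s \<ge> 1" for s
  proof -
    have "real (Suc s - last_cut \<sigma> 1 (Suc s)) \<le> H"
      using H[of "Suc s" 1] n1 h1 by (simp add: height_before_cut_def)
    then have ge: "s \<le> last_cut \<sigma> 1 (Suc s)" using \<open>\<not> 2 \<le> H\<close> by linarith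
    then have "{x. 1 \<le> x \<and> x < Suc s \<and> \<sigma> x = 1} \<noteq> {}"
      using \<open>s \<ge> 1\<close> last_cut_eq_0 by fastforce
    from last_cut_greatest(1)[OF this] ge show ?thesis by (auto dest: le_antisym)
  qed
  have "cut_count \<sigma> 2 T = 0" for T unfolding cut_count_def using cut_1 by auto
  then have grow: "h 2 * real T \<le> H" if "T \<ge> 1" for T
    using growth_le_cut_count[of h \<sigma> 2 H T] H \<open>n \<ge> 2\<close> that by simp
  have h2: "h 2 > 0" using valid_instance_pos[OF vi, of 2] \<open>n \<ge> 2\<close> by simp
  obtain T :: nat where T: "H / h 2 < real T" using reals_Archimedean2 by blast
  have "0 \<le> H / h 2" using one_le_height_bound[OF vi assms(2)] h2 by simp
  then have "T \<ge> 1" using T by linarith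
  with grow[OF this] T h2 show False by (simp add: field_simps)
qed

lemma ereal_le_opt_height:
  assumes "\<And>\<sigma> H. is_schedule n \<sigma> \<Longrightarrow> heights_bounded_by n h \<sigma> H \<Longrightarrow> r \<le> H"
  shows "ereal r \<le> opt_height n h"
  unfolding opt_height_def
proof (rule INF_greatest)
  fix \<sigma> assume "\<sigma> \<in> {\<sigma>. is_schedule n \<sigma>}"
  then have sch: "is_schedule n \<sigma>" by simp
  show "ereal r \<le> schedule_height n h \<sigma>"
  proof (rule ccontr)
    assume "\<not> ?thesis"
    then have "schedule_height n h \<sigma> < ereal r" by simp
    then obtain z where z: "schedule_height n h \<sigma> < ereal z" "ereal z < ereal r"
      using ereal_dense2 by blast
    have "heights_bounded_by n h \<sigma> z"
      unfolding heights_bounded_by_def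
    proof (intro allI impI)
      fix t j :: nat assume tj: "t \<ge> 1" "j \<in> {1..n}"
      have "ereal (height_before_cut h \<sigma> j t) \<le> schedule_height n h \<sigma>"
        unfolding schedule_height_def by (rule SUP_upper2[of t]) (use tj in \<open>auto intro: SUP_upper\<close>)
      then have "ereal (height_before_cut h \<sigma> j t) < ereal z" using z(1) by (rule le_less_trans)
      then show "height_before_cut h \<sigma> j t \<le> z" by simp
    qed
    then have "r \<le> z" by (rule assms[OF sch])
    with z(2) show False by simp
  qed
qed

section \<open>The partition into classes\<close>

lemma dyadic_exponent_unique:
  fixes x :: real
  assumes "(1/2)^Suc k < x" "x \<le> (1/2)^k" "(1/2)^Suc k' < x" "x \<le> (1/2)^k'"
  shows "k = k'"
proof -
  have False if "p < q" "(1/2)^Suc p < x" "x \<le> (1/2)^q" for p q :: nat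
  proof -
    have "((1/2::real))^q \<le> (1/2)^Suc p" using \<open>p < q\<close> by (intro power_decreasing) auto
    with that show False by linarith
  qed
  with assms show ?thesis by (metis linorder_neqE_nat)
qed

lemma h2_S3_eq:
  assumes "2/3 * (1/2)^k < x" "x \<le> (1/2)^k" "k \<ge> 1"
  shows "h2_S3 x = (1/2)^k"
proof -
  have "(THE k::nat. k \<ge> 1 \<and> 2/3 * (1/2)^k < x \<and> x \<le> (1/2)^k) = k"
  proof (rule the_equality)
    fix k' :: nat assume "k' \<ge> 1 \<and> 2/3 * (1/2)^k' < x \<and> x \<le> (1/2)^k'"
    then show "k' = k" using assms by (intro dyadic_exponent_unique[of k' x k]) auto
  qed (use assms in auto)
  then show ?thesis unfolding h2_S3_def by simp
qed

lemma h2_S4_eq: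
  assumes "(1/2)^(k+1) < x" "x \<le> 2/3 * (1/2)^k" "k \<ge> 1"
  shows "h2_S4 x = 2/3 * (1/2)^k"
proof -
  have "(THE k::nat. k \<ge> 1 \<and> (1/2)^(k+1) < x \<and> x \<le> 2/3 * (1/2)^k) = k"
  proof (rule the_equality)
    fix k' :: nat assume "k' \<ge> 1 \<and> (1/2)^(k'+1) < x \<and> x \<le> 2/3 * (1/2)^k'"
    then show "k' = k" using assms by (intro dyadic_exponent_unique[of k' x k]) auto
  qed (use assms in auto)
  then show ?thesis unfolding h2_S4_def by simp
qed

lemma h2_S3_bounds:
  assumes "j \<in> S3 n h"
  shows "0 \<le> h2_S3 (h j)" "2/3 * h2_S3 (h j) \<le> h j"
proof -
  obtain k :: nat where "k \<ge> 1" "2/3 * (1/2)^k < h j" "h j \<le> (1/2)^k"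
    using assms unfolding S3_def by auto
  then show "0 \<le> h2_S3 (h j)" "2/3 * h2_S3 (h j) \<le> h j" by (simp_all add: h2_S3_eq)
qed

lemma h2_S4_bounds:
  assumes "j \<in> S4 n h"
  shows "0 \<le> h2_S4 (h j)" "2/3 * h2_S4 (h j) \<le> h j"
proof -
  obtain k :: nat where "k \<ge> 1" "(1/2)^(k+1) < h j" "h j \<le> 2/3 * (1/2)^k"
    using assms unfolding S4_def by auto
  then show "0 \<le> h2_S4 (h j)" "2/3 * h2_S4 (h j) \<le> h j" by (simp_all add: h2_S4_eq)
qed

lemma S3_S4_disjoint: "S3 n h \<inter> S4 n h = {}"
proof -
  have False if "j \<in> S3 n h" "j \<in> S4 n h" for j
  proof -
    obtain k :: nat where k: "2/3 * (1/2)^k < h j" "h j \<le> (1/2)^k"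
      using \<open>j \<in> S3 n h\<close> unfolding S3_def by auto
    obtain k' :: nat where k': "(1/2)^Suc k' < h j" "h j \<le> 2/3 * (1/2)^k'"
      using \<open>j \<in> S4 n h\<close> unfolding S4_def by auto
    have "k = k'" using k k' by (intro dyadic_exponent_unique[of k "h j" k']) auto
    with k k' show False by simp
  qed
  then show ?thesis by blast
qed

lemma sh3_bounds: "0 \<le> sh3 n h" "2/3 * sh3 n h \<le> (\<Sum>j\<in>S3 n h. h j)"
  unfolding sh3_def sum_distrib_left
  by (rule sum_nonneg sum_mono, erule h2_S3_bounds)+

lemma sh4_bounds: "0 \<le> sh4 n h" "2/3 * sh4 n h \<le> (\<Sum>j\<in>S4 n h. h j)"
  unfolding sh4_def sum_distrib_left
  by (rule sum_nonneg sum_mono, erule h2_S4_bounds)+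

lemma S1_S2_card_le: "card (S1 n h) + card (S2 n h) \<le> n"
proof -
  have "S1 n h \<inter> S2 n h = {}" "S1 n h \<union> S2 n h \<subseteq> {1..n}" unfolding S1_def S2_def by auto
  then have "card (S1 n h) + card (S2 n h) = card (S1 n h \<union> S2 n h)"
    by (intro card_Un_disjoint[symmetric]) (auto intro: finite_subset)
  also have "\<dots> \<le> card {1..n}" by (rule card_mono) (use \<open>_ \<subseteq> {1..n}\<close> in auto)
  finally show ?thesis by simp
qed

lemma sum_classes_le_sum_rates:
  assumes "valid_instance n h"
  shows "(\<Sum>j\<in>S1 n h. h j) + (\<Sum>j\<in>S2 n h. h j) + (\<Sum>j\<in>S3 n h. h j) + (\<Sum>j\<in>S4 n h. h j)
    \<le> (\<Sum>j\<in>{1..n}. h j)"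
proof -
  have sub: "S1 n h \<subseteq> {1..n}" "S2 n h \<subseteq> {1..n}" "S3 n h \<subseteq> {1..n}" "S4 n h \<subseteq> {1..n}"
    unfolding S1_def S2_def S3_def S4_def by auto
  then have fin: "finite (S1 n h)" "finite (S2 n h)" "finite (S3 n h)" "finite (S4 n h)"
    by (auto intro: finite_subset)
  have "S1 n h \<inter> S2 n h = {}" "(S1 n h \<union> S2 n h) \<inter> (S3 n h \<union> S4 n h) = {}"
    unfolding S1_def S2_def S3_def S4_def by auto
  with fin S3_S4_disjoint[of n h]
  have "(\<Sum>j\<in>S1 n h \<union> S2 n h \<union> (S3 n h \<union> S4 n h). h j) =
      (\<Sum>j\<in>S1 n h. h j) + (\<Sum>j\<in>S2 n h. h j) + ((\<Sum>j\<in>S3 n h. h j) + (\<Sum>j\<in>S4 n h. h j))"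
    by (simp add: sum.union_disjoint)
  moreover have "(\<Sum>j\<in>S1 n h \<union> S2 n h \<union> (S3 n h \<union> S4 n h). h j) \<le> (\<Sum>j\<in>{1..n}. h j)"
    using sub valid_instance_pos[OF assms] by (intro sum_mono2) (auto intro: less_imp_le)
  ultimately show ?thesis by simp
qed

lemma one_in_S1: "valid_instance n h \<Longrightarrow> 1 \<in> S1 n h"
  unfolding valid_instance_def S1_def by auto

lemma sum_S1_ge:
  assumes "valid_instance n h"
  shows "1/3 + 2/3 * real (card (S1 n h)) \<le> (\<Sum>j\<in>S1 n h. h j)"
proof -
  have "h 1 - 2/3 \<le> (\<Sum>j\<in>S1 n h. h j - 2/3)"
    by (rule member_le_sum[OF one_in_S1[OF assms]]) (auto simp: S1_def)
  then show ?thesis using assms by (simp add: sum_subtractf valid_instance_def)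
qed

lemma Max_S2_bounds:
  assumes "S2 n h \<noteq> {}"
  shows "Max (h ` S2 n h) \<in> h ` S2 n h" "1/2 < Max (h ` S2 n h)" "Max (h ` S2 n h) \<le> 2/3"
proof -
  show "Max (h ` S2 n h) \<in> h ` S2 n h" using assms by (intro Max_in) (auto simp: S2_def)
  then show "1/2 < Max (h ` S2 n h)" "Max (h ` S2 n h) \<le> 2/3" by (auto simp: S2_def)
qed

lemma sum_S2_ge:
  assumes "S2 n h \<noteq> {}"
  shows "Max (h ` S2 n h) + (real (card (S2 n h)) - 1) / 2 \<le> (\<Sum>j\<in>S2 n h. h j)"
proof -
  obtain j0 where j0: "j0 \<in> S2 n h" "Max (h ` S2 n h) = h j0" using Max_S2_bounds(1)[OF assms] by auto
  have "h j0 - 1/2 \<le> (\<Sum>j\<in>S2 n h. h j - 1/2)"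
    by (rule member_le_sum[OF j0(1)]) (auto simp: S2_def)
  then show ?thesis using j0(2) by (simp add: sum_subtractf diff_divide_distrib)
qed

section \<open>The value of PW''\<close>

lemma ceiling_add_fractional_parts:
  fixes c x y :: real
  shows "of_int \<lfloor>x\<rfloor> + of_int \<lfloor>y\<rfloor> + of_int \<lceil>c + (x - of_int \<lfloor>x\<rfloor>) + (y - of_int \<lfloor>y\<rfloor>)\<rceil>
    = (of_int \<lceil>c + x + y\<rceil> :: real)"
proof -
  have "c + (x - of_int \<lfloor>x\<rfloor>) + (y - of_int \<lfloor>y\<rfloor>) = c + x + y - of_int (\<lfloor>x\<rfloor> + \<lfloor>y\<rfloor>)"
    by simp
  then have "\<lceil>c + (x - of_int \<lfloor>x\<rfloor>) + (y - of_int \<lfloor>y\<rfloor>)\<rceil> = \<lceil>c + x + y\<rceil> - (\<lfloor>x\<rfloor> + \<lfloor>y\<rfloor>)"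
    by (simp only: ceiling_diff_of_int)
  then show ?thesis by simp
qed

lemma z_a_eq: "z_a n h = real (card (S1 n h)) + real (card (S2 n h)) + of_int \<lceil>sh3 n h + sh4 n h\<rceil>"
  using ceiling_add_fractional_parts[where c=0 and x="sh3 n h" and y="sh4 n h"]
  unfolding z_a_def Let_def add_0_left by linarith

lemma z_b_eq:
  assumes "S2 n h \<noteq> {}"
  shows "z_b n h = ereal (2 * Max (h ` S2 n h) *
    (real (card (S1 n h)) + of_int \<lceil>real (card (S2 n h)) / 2 + sh3 n h + sh4 n h\<rceil>))"
proof -
  define b where "b = card (S2 n h)"
  define f2 :: real where "f2 = (if odd b then 1/2 else 0)"
  have "real b / 2 + sh3 n h + sh4 n h = (f2 + sh3 n h + sh4 n h) + of_int (int (b div 2))"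
    unfolding f2_def by (cases "odd b") (auto elim!: oddE)
  then have "of_int \<lceil>real b / 2 + sh3 n h + sh4 n h\<rceil>
      = real (b div 2) + of_int \<lceil>f2 + sh3 n h + sh4 n h\<rceil>"
    by (simp only: ceiling_add_of_int)
  then show ?thesis
    using assms ceiling_add_fractional_parts[where c=f2 and x="sh3 n h" and y="sh4 n h"]
    unfolding z_b_def Let_def b_def[symmetric] f2_def[symmetric] by simp
qed

lemma H_PW2_single_bamboo:
  assumes "valid_instance 1 h"
  shows "H_PW2 1 h = 1"
proof -
  have "h 1 = 1" using assms unfolding valid_instance_def by simp
  then have "S1 1 h = {1}" "S2 1 h = {}" "S3 1 h = {}" "S4 1 h = {}"
    unfolding S1_def S2_def S3_def S4_def by auto
  then show ?thesis unfolding H_PW2_def z_b_def by (simp add: z_a_eq sh3_def sh4_def)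
qed

text \<open>The two options are combined with weights 5/8 and 3/8, and the lower bounds
  on the optimum with weights 1/30 and 29/30.\<close>
lemma min_options_le_ratio:
  fixes m b x L :: real
  assumes "m \<ge> 1" "b \<ge> 1" "1 < x" "x \<le> 4/3" "L \<ge> 2" "L \<ge> 2*m/3 + x/2 + b/2 - 1/6"
  shows "min (m + b + 1) (x * (m + b/2 + 1)) \<le> 32000/16947 * L"
proof -
  have "0 \<le> (x - 1) * (m - 1)" "0 \<le> (4/3 - x) * (m - 1)" "0 \<le> (x - 1) * (b - 1)" "0 \<le> (4/3 - x) * (b - 1)"
    using assms by simp_all
  then have "5/3 * (m + b + 1) + x * (m + b/2 + 1)
      \<le> 8/3 * (32000/16947) * (1/30 * 2 + 29/30 * (2*m/3 + x/2 + b/2 - 1/6))"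
    using assms by (simp add: algebra_simps) argo
  moreover have "8/3 * min (m + b + 1) (x * (m + b/2 + 1)) \<le> 5/3 * (m + b + 1) + x * (m + b/2 + 1)"
    by (simp add: min_def) argo
  ultimately show ?thesis using assms by argo
qed

lemma H_PW2_le_ratio_mult:
  assumes vi: "valid_instance n h"
    and sum_le: "(\<Sum>j\<in>{1..n}. h j) \<le> L" and two_le: "n \<ge> 2 \<Longrightarrow> 2 \<le> L"
  shows "H_PW2 n h \<le> ereal (32000/16947 * L)"
proof -
  define a b s where "a = real (card (S1 n h))" and "b = real (card (S2 n h))"
    and "s = sh3 n h + sh4 n h"
  have "finite (S1 n h)" unfolding S1_def by simp
  then have a: "a \<ge> 1" using one_in_S1[OF vi] unfolding a_def by (auto simp: Suc_le_eq card_gt_0_iff)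
  have s: "s \<ge> 0" and lower: "1/3 + 2/3 * a + 2/3 * s + (\<Sum>j\<in>S2 n h. h j) \<le> L"
    using sh3_bounds[of n h] sh4_bounds[of n h] sum_S1_ge[OF vi] sum_classes_le_sum_rates[OF vi] sum_le
    unfolding a_def s_def distrib_left by linarith+
  have "z_a n h \<le> a + s + b + 1"
    using of_int_ceiling_le_add_one[of s] unfolding z_a_eq a_def b_def s_def by linarith
  then have z_a: "H_PW2 n h \<le> ereal (a + s + b + 1)"
    unfolding H_PW2_def by (simp add: min.coboundedI1)
  show ?thesis
  proof (cases "S2 n h = {}")
    case True
    show ?thesis
    proof (cases "n \<ge> 2")
      case True
      have "a + s + b + 1 \<le> 32000/16947 * L"
        using two_le[OF True] lower a s \<open>S2 n h = {}\<close> unfolding b_def by simp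
      with z_a show ?thesis by (auto elim: order_trans)
    next
      case False
      with vi have "n = 1" unfolding valid_instance_def by simp
      then have "H_PW2 n h = ereal 1" using vi H_PW2_single_bamboo by (simp add: one_ereal_def)
      moreover have "1 \<le> L" using sum_le vi \<open>n = 1\<close> unfolding valid_instance_def by simp
      ultimately show ?thesis by simp
    qed
  next
    case False
    define M where "M = Max (h ` S2 n h)"
    have M: "1/2 < M" "M \<le> 2/3" using Max_S2_bounds[OF False] unfolding M_def by auto
    have "b \<ge> 1" using False unfolding b_def by (simp add: Suc_leI card_gt_0_iff S2_def)
    then have "n \<ge> 2" using S1_S2_card_le[of n h] a unfolding a_def b_def by linarith
    have "M + (b - 1) / 2 \<le> (\<Sum>j\<in>S2 n h. h j)"
      using sum_S2_ge[OF False] unfolding M_def b_def .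
    then have "min (a + s + b + 1) (2 * M * (a + s + b/2 + 1)) \<le> 32000/16947 * L"
      using a s M \<open>b \<ge> 1\<close> lower two_le[OF \<open>n \<ge> 2\<close>]
      by (intro min_options_le_ratio) (simp_all add: field_simps)
    moreover have "H_PW2 n h \<le> ereal (2 * M * (a + s + b/2 + 1))"
    proof -
      have "H_PW2 n h \<le> z_b n h" unfolding H_PW2_def by simp
      also have "\<dots> \<le> ereal (2 * M * (a + s + b/2 + 1))"
        using z_b_eq[OF False] of_int_ceiling_le_add_one[of "b/2 + s"] M(1)
        unfolding M_def[symmetric] a_def b_def s_def by (simp add: add.assoc)
      finally show ?thesis .
    qed
    ultimately show ?thesis
      using z_a unfolding min_le_iff_disj by (auto elim: order_trans)
  qed
qed

theorem corollary1:
  fixes n :: nat and h :: "nat \<Rightarrow> real"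
  assumes "valid_instance n h"
  shows "H_PW2 n h \<le> ereal (32000 / 16947) * opt_height n h"
proof -
  define L where "L = (if n \<ge> 2 then max (\<Sum>j\<in>{1..n}. h j) 2 else (\<Sum>j\<in>{1..n}. h j))"
  have "ereal L \<le> opt_height n h"
  proof (rule ereal_le_opt_height)
    fix \<sigma> H assume "is_schedule n \<sigma>" "heights_bounded_by n h \<sigma> H"
    with assms have "(\<Sum>j\<in>{1..n}. h j) \<le> H" by (rule sum_rates_le_height_bound)
    moreover have "n \<ge> 2 \<Longrightarrow> 2 \<le> H"
      using assms \<open>heights_bounded_by n h \<sigma> H\<close> by (rule two_le_height_bound)
    ultimately show "L \<le> H" unfolding L_def by simp
  qed
  have "H_PW2 n h \<le> ereal (32000 / 16947 * L)"
    using assms by (rule H_PW2_le_ratio_mult) (auto simp: L_def)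
  also have "\<dots> = ereal (32000 / 16947) * ereal L" by simp
  also have "\<dots> \<le> ereal (32000 / 16947) * opt_height n h"
    using \<open>ereal L \<le> opt_height n h\<close> by (rule ereal_mult_left_mono) simp
  finally show ?thesis .
qed

end
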